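(* For all integers $n>m\geq 1$, the group $\mathrm{Diff}^\omega_+(\mathbb{R})$ of orientation-preserving real-analytic diffeomorphisms of $\mathbb{R}$ contains a subgroup isomorphic to the Baumslag–Solitar group $\mathrm{BS}(m,n)=\langle a,b : ab^ma^{-1}=b^n\rangle$. The same holds for the groups $\mathrm{Homeo}_+(S^1)$ and $\mathrm{Homeo}_+([0,1])$ of orientation-preserving homeomorphisms of the circle and of the interval. *)

theory Defs
  imports "HOL-Analysis.Analysis" "HOL-Algebra.Group"
begin

datatype bs_gen = GenA | GenB

text \<open>A letter is a generator with a sign (True = the generator, False = its inverse).\<close>
type_synonym bs_letter = "bool \<times> bs_gen"

definition bs_inv_letter :: "bs_letter \<Rightarrow> bs_letter" where
  "bs_inv_letter x = (\<not> fst x, snd x)"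

definition bs_relator :: "nat \<Rightarrow> nat \<Rightarrow> bs_letter list" where
  "bs_relator m n =
     [(True, GenA)] @ replicate m (True, GenB) @ [(False, GenA)] @ replicate n (False, GenB)"

inductive bs_equiv :: "nat \<Rightarrow> nat \<Rightarrow> bs_letter list \<Rightarrow> bs_letter list \<Rightarrow> bool"
  for m n :: nat where
  refl: "bs_equiv m n w w"
| sym: "bs_equiv m n u v \<Longrightarrow> bs_equiv m n v u"
| trans: "bs_equiv m n u v \<Longrightarrow> bs_equiv m n v w \<Longrightarrow> bs_equiv m n u w"
| cancel: "bs_equiv m n (u @ v) (u @ [x, bs_inv_letter x] @ v)"
| relator: "bs_equiv m n (u @ v) (u @ bs_relator m n @ v)"

definition bs_rel :: "nat \<Rightarrow> nat \<Rightarrow> (bs_letter list \<times> bs_letter list) set" where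
  "bs_rel m n = {(u, v). bs_equiv m n u v}"

definition BS :: "nat \<Rightarrow> nat \<Rightarrow> bs_letter list set monoid" where
  "BS m n = \<lparr> carrier = UNIV // bs_rel m n,
              mult = (\<lambda>X Y. (\<Union>x\<in>X. \<Union>y\<in>Y. bs_rel m n `` {x @ y})),
              one = bs_rel m n `` {[]} \<rparr>"

definition real_analytic_at :: "(real \<Rightarrow> real) \<Rightarrow> real \<Rightarrow> bool" where
  "real_analytic_at f x \<longleftrightarrow>
     (\<exists>r>0. \<exists>c :: nat \<Rightarrow> real. \<forall>y. \<bar>y - x\<bar> < r \<longrightarrow> (\<lambda>k. c k * (y - x) ^ k) sums f y)"

definition real_analytic :: "(real \<Rightarrow> real) \<Rightarrow> bool" where
  "real_analytic f \<longleftrightarrow> (\<forall>x. real_analytic_at f x)"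

definition Diff_omega_plus_R :: "(real \<Rightarrow> real) monoid" where
  "Diff_omega_plus_R = \<lparr> carrier = {f. bij f \<and> strict_mono f \<and> real_analytic f \<and> real_analytic (Hilbert_Choice.inv f)},
                         mult = (\<lambda>f g. f \<circ> g),
                         one = id \<rparr>"

definition Homeo_plus_I :: "(real \<Rightarrow> real) monoid" where
  "Homeo_plus_I = \<lparr> carrier = {f. (\<exists>g. homeomorphism {0..1} {0..1} f g)
                                 \<and> strict_mono_on {0..1} f
                                 \<and> (\<forall>x. x \<notin> {0..1} \<longrightarrow> f x = x)},
                    mult = (\<lambda>f g. f \<circ> g),
                    one = id \<rparr>"

definition circle :: "complex set" where
  "circle = {z. norm z = 1}"

text \<open>A homeomorphism of S^1 is orientation preserving iff it lifts, via
  t \<mapsto> exp(2 pi i t), to an increasing homeomorphism F of R with F(t+1) = F(t)+1.\<close>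
definition Homeo_plus_S1 :: "(complex \<Rightarrow> complex) monoid" where
  "Homeo_plus_S1 = \<lparr> carrier = {f. (\<exists>g. homeomorphism circle circle f g)
                       \<and> (\<exists>F :: real \<Rightarrow> real. continuous_on UNIV F \<and> strict_mono F
                            \<and> (\<forall>t. F (t + 1) = F t + 1)
                            \<and> (\<forall>t. f (cis (2 * pi * t)) = cis (2 * pi * F t)))
                       \<and> (\<forall>z. z \<notin> circle \<longrightarrow> f z = z)},
                     mult = (\<lambda>f g. f \<circ> g),
                     one = id \<rparr>"

definition contains_copy_of :: "('a, 'c) monoid_scheme \<Rightarrow> ('b, 'd) monoid_scheme \<Rightarrow> bool" where
  "contains_copy_of G H \<longleftrightarrow> (\<exists>K. subgroup K G \<and> H \<cong> G\<lparr>carrier := K\<rparr>)"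

end

(*
  BS(m,n) acts on the real line with b as the translation x |-> x + 1 and a as an increasing
  map alpha with alpha (x + m) = alpha x + n, a rescaling of the lift to R of the Moebius map
  z |-> (z - r) / (1 - r z) of the unit circle. For r close to 1, alpha moves every point at
  distance at least 1/8 from mZ to within 1/8 of 1/2 + nZ, and alpha^-1 does the converse.
  Following the orbit of 1/4 through a word without a Britton pinch (a b^(km) a^-1 or
  a^-1 b^(kn) a) shows that such a word can only act trivially if it is a power of b with
  exponent 0; pinches are removed by the defining relation, so the action is faithful. The
  Moebius lift extends holomorphically to a neighbourhood of R, hence the action is by
  real-analytic diffeomorphisms. Conjugating by an increasing homeomorphism from R onto (0,1)
  gives an action on [0,1], and identifying the endpoints an action on the circle.
*)

theory Submission
  imports Defs "HOL-Complex_Analysis.Cauchy_Integral_Formula"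
begin

section \<open>Words in the Baumslag--Solitar group\<close>

abbreviation a_ltr :: bs_letter where "a_ltr \<equiv> (True, GenA)"
abbreviation a_inv_ltr :: bs_letter where "a_inv_ltr \<equiv> (False, GenA)"
abbreviation b_ltr :: bs_letter where "b_ltr \<equiv> (True, GenB)"
abbreviation b_inv_ltr :: bs_letter where "b_inv_ltr \<equiv> (False, GenB)"

lemma bs_inv_letter_simps [simp]:
  "bs_inv_letter (s, x) = (\<not> s, x)"
  "bs_inv_letter (bs_inv_letter l) = l"
  by (simp_all add: bs_inv_letter_def)

declare bs_equiv.trans [trans]

lemma bs_equiv_in_context:
  "bs_equiv m n u v \<Longrightarrow> bs_equiv m n (p @ u @ q) (p @ v @ q)"
proof (induction rule: bs_equiv.induct)
  case (cancel u v x)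
  show ?case using bs_equiv.cancel[of m n "p @ u" "v @ q" x] by simp
next
  case (relator u v)
  show ?case using bs_equiv.relator[of m n "p @ u" "v @ q"] by simp
qed (blast intro: bs_equiv.intros)+

lemma bs_equiv_append:
  "bs_equiv m n u u' \<Longrightarrow> bs_equiv m n v v' \<Longrightarrow> bs_equiv m n (u @ v) (u' @ v')"
  using bs_equiv_in_context[of m n u u' "[]" v] bs_equiv_in_context[of m n v v' u' "[]"]
  by (auto intro: bs_equiv.trans)

lemma bs_equiv_cancel_pair: "bs_equiv m n (u @ [x, bs_inv_letter x] @ v) (u @ v)"
  by (rule bs_equiv.sym, rule bs_equiv.cancel)

definition bs_inv_word :: "bs_letter list \<Rightarrow> bs_letter list" where
  "bs_inv_word w = rev (map bs_inv_letter w)"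

lemma bs_inv_word_simps [simp]:
  "bs_inv_word [] = []"
  "bs_inv_word (x # w) = bs_inv_word w @ [bs_inv_letter x]"
  "bs_inv_word (u @ v) = bs_inv_word v @ bs_inv_word u"
  "bs_inv_word (bs_inv_word w) = w"
  "bs_inv_word (replicate k x) = replicate k (bs_inv_letter x)"
  by (simp_all add: bs_inv_word_def rev_map comp_def)

lemma bs_equiv_inv_word_append: "bs_equiv m n (bs_inv_word w @ w) []"
proof (induction w)
  case Nil
  show ?case by (simp add: bs_equiv.refl)
next
  case (Cons x w)
  have "bs_equiv m n (bs_inv_word w @ [bs_inv_letter x, x] @ w) (bs_inv_word w @ w)"
    using bs_equiv_cancel_pair[of m n _ "bs_inv_letter x"] by simp
  with Cons.IH show ?case by (auto intro: bs_equiv.trans)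
qed

lemma bs_equiv_append_inv_word: "bs_equiv m n (w @ bs_inv_word w) []"
  using bs_equiv_inv_word_append[of m n "bs_inv_word w"] by simp

lemma bs_equiv_inv_word:
  assumes "bs_equiv m n u v"
  shows "bs_equiv m n (bs_inv_word u) (bs_inv_word v)"
proof -
  have "bs_equiv m n (bs_inv_word u) (bs_inv_word u @ v @ bs_inv_word v)"
    using bs_equiv_append[OF bs_equiv.refl bs_equiv.sym[OF bs_equiv_append_inv_word[of m n v]]]
    by simp
  also have "bs_equiv m n \<dots> ((bs_inv_word u @ u) @ bs_inv_word v)"
    using bs_equiv_in_context[OF bs_equiv.sym[OF assms]] by simp
  also have "bs_equiv m n \<dots> (bs_inv_word v)"
    using bs_equiv_append[OF bs_equiv_inv_word_append bs_equiv.refl] by simp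
  finally show ?thesis .
qed

lemma bs_equiv_if_append_inv_word:
  assumes "bs_equiv m n (u @ bs_inv_word v) []"
  shows "bs_equiv m n u v"
proof -
  have "bs_equiv m n u ((u @ bs_inv_word v) @ v)"
    using bs_equiv_append[OF bs_equiv.refl bs_equiv.sym[OF bs_equiv_inv_word_append[of m n v]]]
    by simp
  also have "bs_equiv m n \<dots> v"
    using bs_equiv_append[OF assms bs_equiv.refl] by simp
  finally show ?thesis .
qed

definition b_pow :: "int \<Rightarrow> bs_letter list" where
  "b_pow k = (if 0 \<le> k then replicate (nat k) b_ltr else replicate (nat (- k)) b_inv_ltr)"

definition b_word :: "bs_letter list \<Rightarrow> bool" where
  "b_word w \<longleftrightarrow> (\<forall>x \<in> set w. snd x = GenB)"

fun b_exponent :: "bs_letter list \<Rightarrow> int" where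
  "b_exponent [] = 0"
| "b_exponent (x # w) = (if snd x = GenB then (if fst x then 1 else -1) else 0) + b_exponent w"

definition a_count :: "bs_letter list \<Rightarrow> nat" where
  "a_count w = length (filter (\<lambda>x. snd x = GenA) w)"

lemma b_exponent_append [simp]: "b_exponent (u @ v) = b_exponent u + b_exponent v"
  by (induction u) auto

lemma b_exponent_replicate [simp]:
  "b_exponent (replicate k (s, GenB)) = (if s then int k else - int k)"
  by (induction k) auto

lemma a_count_append [simp]: "a_count (u @ v) = a_count u + a_count v"
  by (simp add: a_count_def)

lemma a_count_eq_0_iff: "a_count w = 0 \<longleftrightarrow> b_word w"
proof -
  have "snd x \<noteq> GenA \<longleftrightarrow> snd x = GenB" for x :: bs_letter
    by (cases "snd x") auto
  then show ?thesis by (simp add: a_count_def b_word_def filter_empty_conv)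
qed

lemma b_word_b_pow [simp]: "b_word (b_pow k)"
  by (simp add: b_word_def b_pow_def)

lemma b_pow_pos: "0 < k \<Longrightarrow> b_pow k = b_ltr # b_pow (k - 1)"
  by (simp add: b_pow_def nat_diff_distrib' flip: replicate_Suc)

lemma b_pow_neg: "k < 0 \<Longrightarrow> b_pow k = b_inv_ltr # b_pow (k + 1)"
  by (cases "k = -1") (simp add: b_pow_def, simp add: b_pow_def nat_diff_distrib' flip: replicate_Suc)

lemma b_pow_of_nat [simp]: "b_pow (int k) = replicate k b_ltr"
  by (simp add: b_pow_def)

lemma b_pow_uminus_of_nat [simp]: "b_pow (- int k) = replicate k b_inv_ltr"
  by (simp add: b_pow_def)

lemma bs_equiv_b_pow_Cons:
  "bs_equiv m n ((s, GenB) # b_pow k) (b_pow (k + (if s then 1 else -1)))"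
proof -
  consider "s" "0 \<le> k" | "s" "k < 0" | "\<not> s" "0 < k" | "\<not> s" "k \<le> 0"
    by linarith
  then show ?thesis
  proof cases
    case 1
    then show ?thesis using b_pow_pos[of "k + 1"] by (simp add: bs_equiv.refl)
  next
    case 2
    then show ?thesis using b_pow_neg[of k] bs_equiv_cancel_pair[of m n "[]" b_ltr] by simp
  next
    case 3
    then show ?thesis using b_pow_pos[of k] bs_equiv_cancel_pair[of m n "[]" b_inv_ltr] by simp
  next
    case 4
    then show ?thesis using b_pow_neg[of "k - 1"] by (simp add: bs_equiv.refl)
  qed
qed

lemma bs_equiv_b_word: "b_word u \<Longrightarrow> bs_equiv m n u (b_pow (b_exponent u))"
proof (induction u)
  case Nil
  show ?case by (simp add: b_pow_def bs_equiv.refl)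
next
  case (Cons x u)
  then obtain s where x: "x = (s, GenB)" and "b_word u"
    by (cases x) (auto simp: b_word_def)
  then have "bs_equiv m n (x # u) (x # b_pow (b_exponent u))"
    using bs_equiv_append[OF bs_equiv.refl Cons.IH, of "[x]"] by simp
  also have "bs_equiv m n \<dots> (b_pow (b_exponent (x # u)))"
    using bs_equiv_b_pow_Cons[of m n s] x by (simp add: add.commute)
  finally show ?case .
qed

lemma bs_equiv_a_b_pow_nat:
  "bs_equiv m n ([a_ltr] @ replicate (j * m) b_ltr @ [a_inv_ltr]) (replicate (j * n) b_ltr)"
proof (induction j)
  case 0
  show ?case using bs_equiv_cancel_pair[of m n "[]" a_ltr "[]"] by simp
next
  case (Suc j)
  have "bs_equiv m n ([a_ltr] @ replicate m b_ltr @ [a_inv_ltr])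
      ([a_ltr] @ replicate m b_ltr @ [a_inv_ltr] @ replicate n b_inv_ltr @ replicate n b_ltr)"
    using bs_equiv_append[OF bs_equiv.refl bs_equiv.sym[OF bs_equiv_inv_word_append],
        of m n "[a_ltr] @ replicate m b_ltr @ [a_inv_ltr]" "replicate n b_ltr"]
    by simp
  also have "bs_equiv m n \<dots> (replicate n b_ltr)"
    using bs_equiv.sym[OF bs_equiv.relator[of m n "[]" "replicate n b_ltr"]]
    by (simp add: bs_relator_def)
  finally have rel: "bs_equiv m n ([a_ltr] @ replicate m b_ltr @ [a_inv_ltr]) (replicate n b_ltr)" .
  have "bs_equiv m n ([a_ltr] @ replicate (Suc j * m) b_ltr @ [a_inv_ltr])
      (([a_ltr] @ replicate m b_ltr @ [a_inv_ltr]) @ ([a_ltr] @ replicate (j * m) b_ltr @ [a_inv_ltr]))"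
    using bs_equiv.sym[OF bs_equiv_cancel_pair[of m n "[a_ltr] @ replicate m b_ltr" a_inv_ltr
          "replicate (j * m) b_ltr @ [a_inv_ltr]"]]
    by (simp add: replicate_add)
  also have "bs_equiv m n \<dots> (replicate (Suc j * n) b_ltr)"
    using bs_equiv_append[OF rel Suc.IH] by (simp add: replicate_add)
  finally show ?case .
qed

lemma bs_equiv_a_b_pow: "bs_equiv m n ([a_ltr] @ b_pow (j * int m) @ [a_inv_ltr]) (b_pow (j * int n))"
proof (cases "0 \<le> j")
  case True
  then obtain i where "j = int i" by (metis nonneg_int_cases)
  then show ?thesis using bs_equiv_a_b_pow_nat[of m n i] by (simp flip: of_nat_mult)
next
  case False
  then obtain i where "j = - int i" by (metis nonpos_int_cases linorder_linear)
  then show ?thesis using bs_equiv_inv_word[OF bs_equiv_a_b_pow_nat[of m n i]]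
    by (simp flip: of_nat_mult)
qed

lemma bs_equiv_a_inv_b_pow: "bs_equiv m n ([a_inv_ltr] @ b_pow (j * int n) @ [a_ltr]) (b_pow (j * int m))"
proof -
  have "bs_equiv m n ([a_inv_ltr] @ b_pow (j * int n) @ [a_ltr])
      ([a_inv_ltr] @ ([a_ltr] @ b_pow (j * int m) @ [a_inv_ltr]) @ [a_ltr])"
    using bs_equiv_in_context[OF bs_equiv.sym[OF bs_equiv_a_b_pow]] .
  also have "bs_equiv m n \<dots> (b_pow (j * int m) @ [a_inv_ltr, a_ltr])"
    using bs_equiv_cancel_pair[of m n "[]" a_inv_ltr] by simp
  also have "bs_equiv m n \<dots> (b_pow (j * int m))"
    using bs_equiv_cancel_pair[of m n "b_pow (j * int m)" a_inv_ltr "[]"] by simp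
  finally show ?thesis .
qed

definition has_pinch :: "nat \<Rightarrow> nat \<Rightarrow> bs_letter list \<Rightarrow> bool" where
  "has_pinch m n w \<longleftrightarrow> (\<exists>p s u q. w = p @ [(s, GenA)] @ u @ [(\<not> s, GenA)] @ q
      \<and> b_word u \<and> int (if s then m else n) dvd b_exponent u)"

lemma bs_equiv_pinch:
  assumes "b_word u" and "int (if s then m else n) dvd b_exponent u"
  shows "\<exists>k. bs_equiv m n ([(s, GenA)] @ u @ [(\<not> s, GenA)]) (b_pow k)"
proof -
  obtain j where j: "b_exponent u = j * int (if s then m else n)"
    using assms(2) by (metis dvdE mult.commute)
  have "bs_equiv m n ([(s, GenA)] @ u @ [(\<not> s, GenA)])
      ([(s, GenA)] @ b_pow (b_exponent u) @ [(\<not> s, GenA)])"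
    using bs_equiv_in_context[OF bs_equiv_b_word[OF assms(1)]] .
  moreover have "bs_equiv m n ([(s, GenA)] @ b_pow (b_exponent u) @ [(\<not> s, GenA)])
      (b_pow (j * int (if s then n else m)))"
    using j bs_equiv_a_b_pow[of m n j] bs_equiv_a_inv_b_pow[of m n j] by (cases s) simp_all
  ultimately show ?thesis by (blast intro: bs_equiv.trans)
qed

lemma has_pinch_shorten:
  assumes "has_pinch m n w"
  obtains w' where "bs_equiv m n w w'" and "a_count w' < a_count w"
proof -
  obtain p s u q where w: "w = p @ ([(s, GenA)] @ u @ [(\<not> s, GenA)]) @ q"
    and u: "b_word u" "int (if s then m else n) dvd b_exponent u"
    using assms by (auto simp: has_pinch_def)
  obtain k where "bs_equiv m n ([(s, GenA)] @ u @ [(\<not> s, GenA)]) (b_pow k)"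
    using bs_equiv_pinch[OF u] by blast
  then have equiv: "bs_equiv m n w (p @ b_pow k @ q)"
    unfolding w by (rule bs_equiv_in_context)
  have "a_count u = 0" "a_count (b_pow k) = 0"
    by (simp_all add: a_count_eq_0_iff u(1))
  then have "a_count (p @ b_pow k @ q) < a_count w"
    by (simp add: w) (simp add: a_count_def)
  with equiv that show ?thesis by blast
qed

lemma first_a_letter:
  assumes "\<not> b_word w"
  obtains u e q where "w = u @ (e, GenA) # q" and "b_word u"
proof -
  have "\<exists>x \<in> set w. snd x = GenA"
    using assms by (auto simp: b_word_def intro: bs_gen.exhaust)
  then obtain u x q where "w = u @ x # q" "snd x = GenA" "\<forall>y \<in> set u. snd y \<noteq> GenA"
    by (rule split_list_first_propE)
  moreover have "snd y = GenB" if "snd y \<noteq> GenA" for y :: bs_letter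
    using that by (cases "snd y") auto
  ultimately show ?thesis
    using that[of u "fst x" q] by (cases x) (auto simp: b_word_def)
qed

lemma not_has_pinch_Cons: "\<not> has_pinch m n (x # w) \<Longrightarrow> \<not> has_pinch m n w"
  unfolding has_pinch_def by (metis append_Cons)

section \<open>Faithful actions\<close>

definition word_action :: "(bs_letter \<Rightarrow> 'x \<Rightarrow> 'x) \<Rightarrow> bs_letter list \<Rightarrow> 'x \<Rightarrow> 'x" where
  "word_action g w = foldr (\<lambda>l f. g l \<circ> f) w id"

lemma word_action_simps [simp]:
  "word_action g [] = id"
  "word_action g (l # w) = g l \<circ> word_action g w"
  "word_action g (u @ v) = word_action g u \<circ> word_action g v"
  by (induction u) (simp_all add: word_action_def o_assoc)

definition faithful_BS_action :: "nat \<Rightarrow> nat \<Rightarrow> (bs_letter \<Rightarrow> 'x \<Rightarrow> 'x) \<Rightarrow> bool" where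
  "faithful_BS_action m n g \<longleftrightarrow> (\<forall>u v. word_action g u = word_action g v \<longleftrightarrow> bs_equiv m n u v)"

lemma word_action_bs_equiv:
  assumes "\<And>l. g l \<circ> g (bs_inv_letter l) = id" and "word_action g (bs_relator m n) = id"
  shows "bs_equiv m n u v \<Longrightarrow> word_action g u = word_action g v"
proof (induction rule: bs_equiv.induct)
  case (cancel u v x)
  show ?case using assms(1)[of x] by (simp add: o_assoc)
next
  case (relator u v)
  show ?case using assms(2) by (simp add: o_assoc)
qed simp_all

lemma faithful_BS_actionI:
  assumes inv: "\<And>l. g l \<circ> g (bs_inv_letter l) = id"
    and rel: "word_action g (bs_relator m n) = id"
    and ker: "\<And>w. word_action g w = id \<Longrightarrow> bs_equiv m n w []"
  shows "faithful_BS_action m n g"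
  unfolding faithful_BS_action_def
proof (intro allI iffI)
  fix u v assume "word_action g u = word_action g v"
  then have "word_action g (u @ bs_inv_word v) = word_action g (v @ bs_inv_word v)"
    by simp
  also have "\<dots> = id"
    using word_action_bs_equiv[OF inv rel bs_equiv_append_inv_word[of m n v]] by simp
  finally show "bs_equiv m n u v"
    by (rule bs_equiv_if_append_inv_word[OF ker])
qed (rule word_action_bs_equiv[OF inv rel])

lemma word_action_hom:
  assumes "\<And>f h. \<Phi> (f \<circ> h) = \<Phi> f \<circ> \<Phi> h" and "\<Phi> id = id"
  shows "word_action (\<lambda>l. \<Phi> (g l)) w = \<Phi> (word_action g w)"
  by (induction w) (simp_all only: word_action_simps assms)

lemma faithful_BS_action_hom:
  assumes "faithful_BS_action m n g"
    and "\<And>f h. \<Phi> (f \<circ> h) = \<Phi> f \<circ> \<Phi> h" and "\<Phi> id = id" and "inj \<Phi>"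
  shows "faithful_BS_action m n (\<lambda>l. \<Phi> (g l))"
proof -
  have "word_action (\<lambda>l. \<Phi> (g l)) w = \<Phi> (word_action g w)" for w
    by (rule word_action_hom[OF assms(2,3)])
  with assms(1,4) show ?thesis
    by (simp add: faithful_BS_action_def inj_eq)
qed

lemma bs_rel_equiv: "equiv UNIV (bs_rel m n)"
  unfolding equiv_def refl_on_def sym_def trans_def bs_rel_def
  by (auto intro: bs_equiv.refl bs_equiv.sym bs_equiv.trans)

lemma bs_class_mult:
  "(\<Union>x \<in> bs_rel m n `` {u}. \<Union>y \<in> bs_rel m n `` {v}. bs_rel m n `` {x @ y}) = bs_rel m n `` {u @ v}"
proof -
  have "bs_rel m n `` {x @ y} = bs_rel m n `` {u @ v}"
    if "x \<in> bs_rel m n `` {u}" "y \<in> bs_rel m n `` {v}" for x y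
  proof (rule equiv_class_eq[OF bs_rel_equiv])
    have "bs_equiv m n u x" "bs_equiv m n v y"
      using that by (simp_all add: bs_rel_def)
    then show "(x @ y, u @ v) \<in> bs_rel m n"
      by (simp add: bs_rel_def bs_equiv.sym bs_equiv_append)
  qed
  moreover have "u \<in> bs_rel m n `` {u}" "v \<in> bs_rel m n `` {v}"
    by (simp_all add: bs_rel_def bs_equiv.refl)
  ultimately show ?thesis by blast
qed

lemma word_action_inv_word:
  assumes "faithful_BS_action m n g"
  shows "word_action g w \<circ> word_action g (bs_inv_word w) = id"
    and "word_action g (bs_inv_word w) \<circ> word_action g w = id"
proof -
  have eq: "word_action g u = word_action g v" if "bs_equiv m n u v" for u v
    using assms that by (simp add: faithful_BS_action_def)
  show "word_action g w \<circ> word_action g (bs_inv_word w) = id"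
    using eq[OF bs_equiv_append_inv_word] by simp
  show "word_action g (bs_inv_word w) \<circ> word_action g w = id"
    using eq[OF bs_equiv_inv_word_append] by simp
qed

lemma subgroup_range_word_action:
  fixes G :: "('x \<Rightarrow> 'x) monoid"
  assumes faithful: "faithful_BS_action m n g"
    and mult: "\<And>f h. f \<otimes>\<^bsub>G\<^esub> h = f \<circ> h" and one: "\<one>\<^bsub>G\<^esub> = id"
    and carrier: "\<And>w. word_action g w \<in> carrier G"
  shows "subgroup (range (word_action g)) G"
proof
  note action_inv = word_action_inv_word[OF faithful]
  have "inv\<^bsub>G\<^esub> (word_action g w) = word_action g (bs_inv_word w)" for w
    unfolding m_inv_def mult one
  proof (rule the_equality)
    fix f assume f: "f \<in> carrier G \<and> word_action g w \<circ> f = id \<and> f \<circ> word_action g w = id"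
    have "f = f \<circ> (word_action g w \<circ> word_action g (bs_inv_word w))"
      using action_inv(1) by simp
    also have "\<dots> = (f \<circ> word_action g w) \<circ> word_action g (bs_inv_word w)"
      by (simp only: o_assoc)
    finally show "f = word_action g (bs_inv_word w)"
      using f by simp
  qed (use carrier action_inv in blast)
  then show "inv\<^bsub>G\<^esub> x \<in> range (word_action g)" if "x \<in> range (word_action g)" for x
    using that by auto
  show "range (word_action g) \<subseteq> carrier G"
    using carrier by auto
  show "x \<otimes>\<^bsub>G\<^esub> y \<in> range (word_action g)"
    if "x \<in> range (word_action g)" "y \<in> range (word_action g)" for x y
    using that by (auto simp: mult simp flip: word_action_simps(3))
  show "\<one>\<^bsub>G\<^esub> \<in> range (word_action g)"
    unfolding one by (rule range_eqI[of _ _ "[]"]) simp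
qed

lemma iso_BS_range_word_action:
  fixes G :: "('x \<Rightarrow> 'x) monoid"
  assumes faithful: "faithful_BS_action m n g" and mult: "\<And>f h. f \<otimes>\<^bsub>G\<^esub> h = f \<circ> h"
  shows "(\<lambda>X. the_elem (word_action g ` X)) \<in> Group.iso (BS m n) (G\<lparr>carrier := range (word_action g)\<rparr>)"
    (is "?h \<in> _")
proof -
  have action_eq: "word_action g u = word_action g v \<longleftrightarrow> bs_equiv m n u v" for u v
    using faithful by (simp add: faithful_BS_action_def)
  have h_class: "?h (bs_rel m n `` {w}) = word_action g w" for w
  proof -
    have "word_action g ` (bs_rel m n `` {w}) = {word_action g w}"
      using action_eq by (auto simp: bs_rel_def intro: bs_equiv.refl bs_equiv.sym)
    then show ?thesis by simp
  qed
  have class_rep: "\<exists>u. X = bs_rel m n `` {u}" if "X \<in> carrier (BS m n)" for X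
    using that by (auto simp: BS_def elim!: quotientE)
  have into: "?h X \<in> range (word_action g)" if "X \<in> carrier (BS m n)" for X
    using class_rep[OF that] by (auto simp: h_class)
  show ?thesis
  proof (rule Group.isoI)
    show "?h \<in> hom (BS m n) (G\<lparr>carrier := range (word_action g)\<rparr>)"
    proof (rule homI)
      fix X Y assume "X \<in> carrier (BS m n)" "Y \<in> carrier (BS m n)"
      with class_rep obtain u v where "X = bs_rel m n `` {u}" "Y = bs_rel m n `` {v}"
        by blast
      then show "?h (X \<otimes>\<^bsub>BS m n\<^esub> Y) = ?h X \<otimes>\<^bsub>G\<lparr>carrier := range (word_action g)\<rparr>\<^esub> ?h Y"
        by (simp add: BS_def bs_class_mult h_class mult)
    qed (simp add: into)
    show "bij_betw ?h (carrier (BS m n)) (carrier (G\<lparr>carrier := range (word_action g)\<rparr>))"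
    proof (rule bij_betwI')
      fix X Y assume "X \<in> carrier (BS m n)" "Y \<in> carrier (BS m n)"
      with class_rep obtain u v where "X = bs_rel m n `` {u}" "Y = bs_rel m n `` {v}"
        by blast
      then show "?h X = ?h Y \<longleftrightarrow> X = Y"
        by (simp add: h_class action_eq eq_equiv_class_iff[OF bs_rel_equiv UNIV_I UNIV_I])
          (simp add: bs_rel_def)
    next
      fix f assume "f \<in> carrier (G\<lparr>carrier := range (word_action g)\<rparr>)"
      then obtain w where "f = word_action g w" by auto
      then show "\<exists>X \<in> carrier (BS m n). f = ?h X"
        by (intro bexI[of _ "bs_rel m n `` {w}"]) (simp_all add: h_class BS_def quotientI)
    qed (simp add: into)
  qed
qed

lemma contains_copy_of_BS:
  fixes G :: "('x \<Rightarrow> 'x) monoid"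
  assumes "faithful_BS_action m n g"
    and "\<And>f h. f \<otimes>\<^bsub>G\<^esub> h = f \<circ> h" and "\<one>\<^bsub>G\<^esub> = id"
    and "\<And>w. word_action g w \<in> carrier G"
  shows "contains_copy_of G (BS m n)"
  using subgroup_range_word_action[OF assms] iso_BS_range_word_action[OF assms(1,2)]
  unfolding contains_copy_of_def is_iso_def by blast

lemma contains_copy_of_BS_hom:
  fixes G :: "('y \<Rightarrow> 'y) monoid"
  assumes "faithful_BS_action m n g"
    and "\<And>f h. \<Phi> (f \<circ> h) = \<Phi> f \<circ> \<Phi> h" and "\<Phi> id = id" and "inj \<Phi>"
    and "\<And>f h. f \<otimes>\<^bsub>G\<^esub> h = f \<circ> h" and "\<one>\<^bsub>G\<^esub> = id"
    and "\<And>w. \<Phi> (word_action g w) \<in> carrier G"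
  shows "contains_copy_of G (BS m n)"
proof (rule contains_copy_of_BS[OF faithful_BS_action_hom[OF assms(1-4)]])
  show "word_action (\<lambda>l. \<Phi> (g l)) w \<in> carrier G" for w
    using assms(7) by (simp add: word_action_hom[OF assms(2,3)])
qed (use assms(5,6) in auto)

section \<open>Ping-pong on the real line\<close>

definition ping_pong_set :: "nat \<Rightarrow> nat \<Rightarrow> bool \<Rightarrow> real \<Rightarrow> bool" where
  "ping_pong_set m n e x \<longleftrightarrow>
     (\<exists>i. \<bar>x - of_int i - (if e then 1/2 else 0)\<bar> < 1/8 \<and> int (if e then n else m) dvd i)"

text \<open>The offsets \<open>0\<close> and \<open>1/2\<close> are those of the two ping-pong sets, \<open>1/4\<close> is the base point.\<close>

lemma near_lattice_points_eq:
  fixes c c' :: real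
  assumes c: "c \<in> {0, 1/4, 1/2}" "c' \<in> {0, 1/4, 1/2}"
    and x: "\<bar>x - of_int i - c\<bar> < 1/8" and y: "\<bar>y - of_int j - c'\<bar> < 1/8"
    and k: "y - x = of_int k"
  shows "c' = c \<and> j = i + k"
proof -
  have "real_of_int (- 1) < of_int (j - i - k)" "real_of_int (j - i - k) < of_int 1"
    using x y k c unfolding abs_less_iff by auto
  then have "j = i + k" by (simp only: of_int_less_iff)
  with x y k have "\<bar>c' - c\<bar> < 1/4"
    unfolding abs_less_iff by auto
  with c show ?thesis using \<open>j = i + k\<close> by auto
qed

lemma ping_pong_offset: "(if e then 1/2 else 0) \<in> {0, 1/4, 1/2 :: real}"
  by simp

lemma not_ping_pong_set_quarter: "\<not> ping_pong_set m n e (1/4 + of_int k)"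
proof
  assume "ping_pong_set m n e (1/4 + of_int k)"
  then obtain i where i: "\<bar>(1/4 + of_int k :: real) - of_int i - (if e then 1/2 else 0)\<bar> < 1/8"
    by (auto simp: ping_pong_set_def)
  have "\<bar>(1/4 + of_int k) - of_int k - 1/4\<bar> < (1/8 :: real)"
    by simp
  from near_lattice_points_eq[where k = 0, OF _ ping_pong_offset this i]
  show False by (simp split: if_splits)
qed

lemma ping_pong_set_shift:
  assumes "ping_pong_set m n e (y - of_int k)" and "ping_pong_set m n e' y"
  shows "e' = e \<and> int (if e then n else m) dvd k"
proof -
  obtain i j where i: "\<bar>(y - of_int k) - of_int i - (if e then 1/2 else 0)\<bar> < 1/8"
      "int (if e then n else m) dvd i"
    and j: "\<bar>y - of_int j - (if e' then 1/2 else 0)\<bar> < 1/8" "int (if e' then n else m) dvd j"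
    using assms by (auto simp: ping_pong_set_def)
  from near_lattice_points_eq[OF ping_pong_offset ping_pong_offset i(1) j(1)]
  have "e' = e" "j = i + k" by (auto split: if_splits)
  with i(2) j(2) show ?thesis by (simp add: dvd_add_right_iff)
qed

lemma word_action_b_word:
  assumes "\<And>s. g (s, GenB) = (\<lambda>x. x + (if s then 1 else -1))" and "b_word w"
  shows "word_action g w x = x + of_int (b_exponent w)"
  using assms(2)
proof (induction w arbitrary: x)
  case (Cons l w)
  then obtain s where "l = (s, GenB)" "b_word w"
    by (cases l) (auto simp: b_word_def)
  with Cons.IH show ?case by (simp add: assms(1))
qed simp

lemma ping_pong_step:
  assumes pinch_free: "\<not> has_pinch m n ((e, GenA) # w)"
    and orbit: "\<And>u e' q. w = u @ (e', GenA) # q \<Longrightarrow> b_word u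
      \<Longrightarrow> ping_pong_set m n e' (y - of_int (b_exponent u))"
    and b_orbit: "b_word w \<Longrightarrow> y = 1/4 + of_int (b_exponent w)"
  shows "\<not> ping_pong_set m n (\<not> e) y"
proof (cases "b_word w")
  case True
  then show ?thesis
    using b_orbit not_ping_pong_set_quarter by simp
next
  case False
  then obtain u e' q where w: "w = u @ (e', GenA) # q" and "b_word u"
    by (rule first_a_letter)
  show ?thesis
  proof
    assume "ping_pong_set m n (\<not> e) y"
    from ping_pong_set_shift[OF orbit[OF w \<open>b_word u\<close>] this]
    have "e' = (\<not> e)" "int (if e then m else n) dvd b_exponent u" by auto
    with w \<open>b_word u\<close> have "has_pinch m n ((e, GenA) # w)"
      unfolding has_pinch_def by (intro exI[of _ "[]"]) auto
    with pinch_free show False by contradiction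
  qed
qed

lemma pinch_free_orbit:
  assumes b: "\<And>s. g (s, GenB) = (\<lambda>x. x + (if s then 1 else -1))"
    and a: "\<And>s x. \<not> ping_pong_set m n (\<not> s) x \<Longrightarrow> ping_pong_set m n s (g (s, GenA) x)"
    and "\<not> has_pinch m n w" and "w = u @ (e, GenA) # q" and "b_word u"
  shows "ping_pong_set m n e (word_action g w (1/4) - of_int (b_exponent u))"
  using assms(3-5)
proof (induction w arbitrary: u e q)
  case Nil
  then show ?case by simp
next
  case (Cons l w)
  have pinch_free: "\<not> has_pinch m n w"
    using Cons.prems(1) by (rule not_has_pinch_Cons)
  show ?case
  proof (cases u)
    case Nil
    with Cons.prems have "l = (e, GenA)" and "\<not> has_pinch m n ((e, GenA) # w)"
      by simp_all
    moreover from this(2) have "\<not> ping_pong_set m n (\<not> e) (word_action g w (1/4))"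
      using Cons.IH[OF pinch_free] word_action_b_word[OF b] by (rule ping_pong_step)
    ultimately show ?thesis using a Nil by simp
  next
    case (Cons l' u')
    with Cons.prems(2) have w: "w = u' @ (e, GenA) # q" and "l' = l" by simp_all
    with Cons.prems(3) \<open>u = l' # u'\<close> obtain s where l: "l = (s, GenB)" and "b_word u'"
      by (cases l) (auto simp: b_word_def)
    have "word_action g (l # w) (1/4) - of_int (b_exponent u)
        = word_action g w (1/4) - of_int (b_exponent u')"
      using l \<open>u = l' # u'\<close> \<open>l' = l\<close> by (simp add: b)
    with Cons.IH[OF pinch_free w \<open>b_word u'\<close>] show ?thesis by simp
  qed
qed

lemma faithful_BS_action_ping_pong:
  assumes b: "\<And>s. g (s, GenB) = (\<lambda>x. x + (if s then 1 else -1))"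
    and a: "\<And>s x. \<not> ping_pong_set m n (\<not> s) x \<Longrightarrow> ping_pong_set m n s (g (s, GenA) x)"
    and inv: "\<And>l. g l \<circ> g (bs_inv_letter l) = id"
    and rel: "word_action g (bs_relator m n) = id"
  shows "faithful_BS_action m n g"
proof (rule faithful_BS_actionI[OF inv rel])
  fix w assume "word_action g w = id"
  then show "bs_equiv m n w []"
  proof (induction "a_count w" arbitrary: w rule: less_induct)
    case less
    show ?case
    proof (cases "has_pinch m n w")
      case True
      then obtain w' where w': "bs_equiv m n w w'" "a_count w' < a_count w"
        by (rule has_pinch_shorten)
      with less.prems have "word_action g w' = id"
        using word_action_bs_equiv[OF inv rel] by simp
      with less.hyps w' show ?thesis by (blast intro: bs_equiv.trans)
    next
      case pinch_free: False
      show ?thesis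
      proof (cases "b_word w")
        case True
        with word_action_b_word[OF b, of w "1/4"] less.prems have "b_exponent w = 0"
          by simp
        with bs_equiv_b_word[OF True] show ?thesis by (simp add: b_pow_def)
      next
        case False
        then obtain u e q where "w = u @ (e, GenA) # q" and "b_word u"
          by (rule first_a_letter)
        from pinch_free_orbit[OF b a pinch_free this] less.prems
        have "ping_pong_set m n e (1/4 + of_int (- b_exponent u))" by simp
        with not_ping_pong_set_quarter show ?thesis by blast
      qed
    qed
  qed
qed

definition line_action :: "(real \<Rightarrow> real) \<Rightarrow> (real \<Rightarrow> real) \<Rightarrow> bs_letter \<Rightarrow> real \<Rightarrow> real" where
  "line_action f f' l = (case l of
      (s, GenA) \<Rightarrow> if s then f else f'
    | (s, GenB) \<Rightarrow> (\<lambda>x. x + (if s then 1 else -1)))"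

lemma line_action_simps [simp]:
  "line_action f f' (s, GenA) = (if s then f else f')"
  "line_action f f' (s, GenB) = (\<lambda>x. x + (if s then 1 else -1))"
  by (simp_all add: line_action_def)

lemma faithful_BS_action_line_action:
  assumes inverse: "f \<circ> f' = id" "f' \<circ> f = id"
    and shift: "\<And>x. f (x + real m) = f x + real n"
    and ping_pong: "\<And>x. \<not> ping_pong_set m n False x \<Longrightarrow> ping_pong_set m n True (f x)"
  shows "faithful_BS_action m n (line_action f f')"
proof (rule faithful_BS_action_ping_pong)
  have f_f': "f (f' x) = x" and f'_f: "f' (f x) = x" for x
    using inverse by (simp_all add: pointfree_idE)
  show "ping_pong_set m n s (line_action f f' (s, GenA) x)"
    if "\<not> ping_pong_set m n (\<not> s) x" for s x
    using that ping_pong[of "f' x"] by (cases s) (auto simp: ping_pong f_f')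
  show "line_action f f' l \<circ> line_action f f' (bs_inv_letter l) = id" for l
    using inverse by (cases l; cases "snd l") (auto simp: fun_eq_iff)
  have "word_action (line_action f f') (bs_relator m n) x = f (f' (x - real n) + real m)" for x
    by (simp add: bs_relator_def word_action_b_word b_word_def)
  then show "word_action (line_action f f') (bs_relator m n) = id"
    by (simp add: fun_eq_iff shift f_f')
qed simp

section \<open>Monotone real functions\<close>

lemma strict_mono_surj_imp_continuous:
  fixes f :: "real \<Rightarrow> real"
  assumes "strict_mono f" and "surj f"
  shows "continuous_on UNIV f"
  by (rule continuous_onI_mono) (simp_all add: assms strict_mono_less_eq)

lemma comp_eq_id_imp_surj: "f \<circ> g = id \<Longrightarrow> surj f"
  by (rule surjI[of f g]) (rule pointfree_idE)

lemma strict_mono_surj_inv: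
  fixes f :: "real \<Rightarrow> real"
  assumes "strict_mono f" and "surj f"
  shows "f \<circ> Hilbert_Choice.inv f = id" "Hilbert_Choice.inv f \<circ> f = id"
    "strict_mono (Hilbert_Choice.inv f)" "surj (Hilbert_Choice.inv f)"
proof -
  have "inj f"
    using assms(1) by (rule strict_mono_imp_inj_on)
  then show "Hilbert_Choice.inv f \<circ> f = id" "surj (Hilbert_Choice.inv f)"
    by (simp_all add: inj_iff inj_imp_surj_inv)
  show "f \<circ> Hilbert_Choice.inv f = id"
    using assms(2) by (simp add: surj_iff)
  show "strict_mono (Hilbert_Choice.inv f)"
    using strict_mono_inv[OF assms] \<open>inj f\<close> by simp
qed

lemma continuous_inj_imp_strict_mono:
  fixes f :: "real \<Rightarrow> real"
  assumes cont: "continuous_on UNIV f" and "inj f" and "a < b" and "f a < f b"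
  shows "strict_mono f"
proof (rule strict_monoI, rule ccontr)
  fix x y :: real assume xy: "x < y" "\<not> f x < f y"
  have "f x \<noteq> f y"
  proof
    assume "f x = f y"
    with \<open>inj f\<close> have "x = y" by (rule injD)
    with xy(1) show False by simp
  qed
  with xy(2) have "f y < f x"
    by linarith
  \<comment> \<open>Slide \<open>(a, b)\<close> linearly to \<open>(x, y)\<close>: the order of the images flips on the way.\<close>
  define h where "h s = f ((1 - s) * b + s * y) - f ((1 - s) * a + s * x)" for s
  have f_cont: "isCont f z" for z
    using cont by (simp add: continuous_on_eq_continuous_at)
  have "isCont h s" for s
    unfolding h_def by (intro continuous_intros continuous_at_compose[OF _ f_cont, unfolded o_def])
  moreover have "h 1 \<le> 0" "0 \<le> h 0"
    using \<open>f y < f x\<close> \<open>f a < f b\<close> by (simp_all add: h_def)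
  ultimately obtain s where s: "0 \<le> s" "s \<le> 1" "h s = 0"
    using IVT2[of h 1 0 0] by auto
  then have "(1 - s) * b + s * y = (1 - s) * a + s * x"
    using \<open>inj f\<close> by (simp add: h_def inj_eq)
  moreover have "(1 - s) * a < (1 - s) * b \<or> s * x < s * y"
  proof (cases "s = 1")
    case False
    with s \<open>a < b\<close> show ?thesis
      by (intro disjI1 mult_strict_left_mono) simp_all
  qed (use xy in simp)
  moreover have "(1 - s) * a \<le> (1 - s) * b" "s * x \<le> s * y"
    using s \<open>a < b\<close> xy(1) mult_left_mono[of a b "1 - s"] mult_left_mono[of x y s] by simp_all
  ultimately show False by linarith
qed

section \<open>A Moebius lift with a holomorphic extension\<close>

definition has_holomorphic_extension :: "(real \<Rightarrow> real) \<Rightarrow> bool" where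
  "has_holomorphic_extension f \<longleftrightarrow>
     (\<exists>F S. open S \<and> \<real> \<subseteq> S \<and> F holomorphic_on S \<and> (\<forall>x. F (of_real x) = of_real (f x)))"

lemma has_holomorphic_extension_imp_real_analytic:
  assumes "has_holomorphic_extension f"
  shows "real_analytic f"
  unfolding real_analytic_def real_analytic_at_def
proof
  fix x :: real
  obtain F S where S: "open S" "\<real> \<subseteq> S" "F holomorphic_on S" "\<And>x. F (of_real x) = of_real (f x)"
    using assms unfolding has_holomorphic_extension_def by blast
  have "complex_of_real x \<in> S"
    using S(2) by auto
  with S(1) obtain e where e: "e > 0" "ball (complex_of_real x) e \<subseteq> S"
    using open_contains_ball by blast
  define c where "c k = Re ((deriv ^^ k) F (of_real x) / fact k)" for k
  have "(\<lambda>k. c k * (y - x) ^ k) sums f y" if y: "\<bar>y - x\<bar> < e" for y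
  proof -
    have "complex_of_real y \<in> ball (of_real x) e"
      using y by (simp add: dist_norm abs_minus_commute flip: of_real_diff)
    from holomorphic_power_series[OF holomorphic_on_subset[OF S(3) e(2)] this]
    have "(\<lambda>k. (deriv ^^ k) F (of_real x) / fact k * (of_real y - of_real x) ^ k) sums F (of_real y)" .
    from sums_Re[OF this]
    have "(\<lambda>k. Re ((deriv ^^ k) F (of_real x) / fact k * of_real ((y - x) ^ k))) sums f y"
      using S(4) by simp
    moreover have "Re (z * complex_of_real a) = Re z * a" for z a
      by simp
    ultimately show ?thesis by (simp only: c_def)
  qed
  with e(1) show "\<exists>r>0. \<exists>c. \<forall>y. \<bar>y - x\<bar> < r \<longrightarrow> (\<lambda>k. c k * (y - x) ^ k) sums f y"
    by blast
qed

lemma has_holomorphic_extension_compose: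
  assumes "has_holomorphic_extension f" and "has_holomorphic_extension g"
  shows "has_holomorphic_extension (f \<circ> g)"
proof -
  obtain F S where S: "open S" "\<real> \<subseteq> S" "F holomorphic_on S" "\<And>x. F (of_real x) = of_real (f x)"
    using assms(1) unfolding has_holomorphic_extension_def by blast
  obtain G T where T: "open T" "\<real> \<subseteq> T" "G holomorphic_on T" "\<And>x. G (of_real x) = of_real (g x)"
    using assms(2) unfolding has_holomorphic_extension_def by blast
  have "open (T \<inter> G -` S)"
    by (rule continuous_open_preimage[OF holomorphic_on_imp_continuous_on[OF T(3)] T(1) S(1)])
  moreover have "\<real> \<subseteq> T \<inter> G -` S"
    using S(2) T(2,4) by (auto simp: subset_iff elim!: Reals_cases)
  moreover have "(F \<circ> G) holomorphic_on T \<inter> G -` S"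
    by (rule holomorphic_on_compose_gen[OF holomorphic_on_subset[OF T(3)] S(3)]) auto
  moreover have "\<forall>x. (F \<circ> G) (of_real x) = of_real ((f \<circ> g) x)"
    using S(4) T(4) by simp
  ultimately show ?thesis
    unfolding has_holomorphic_extension_def by blast
qed

lemma has_holomorphic_extension_affine: "has_holomorphic_extension (\<lambda>x. a * x + b)"
  unfolding has_holomorphic_extension_def
  by (rule exI[of _ "\<lambda>z. of_real a * z + of_real b"], rule exI[of _ UNIV]) (auto intro!: holomorphic_intros)

definition mobius_lift :: "real \<Rightarrow> real \<Rightarrow> real" where
  "mobius_lift r t = t + 2 * arctan (r * sin t / (1 - r * cos t))"

lemma mult_cos_less_one: "\<bar>r :: real\<bar> < 1 \<Longrightarrow> r * cos t < 1"
proof -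
  assume "\<bar>r\<bar> < 1"
  moreover have "\<bar>r * cos t\<bar> \<le> \<bar>r\<bar>"
    using abs_cos_le_one[of t] by (simp add: abs_mult mult_left_le)
  ultimately show ?thesis by linarith
qed

lemma Re_one_minus_mult_cis_pos: "\<bar>r :: real\<bar> < 1 \<Longrightarrow> 0 < Re (1 - of_real r * cis t)"
  using mult_cos_less_one[of r t] by simp

text \<open>On the real axis \<open>Im (Ln (1 - r e\<^sup>i\<^sup>t)) = - arctan (r sin t / (1 - r cos t))\<close>,
  which makes the following holomorphic function an extension of \<^const>\<open>mobius_lift\<close>.\<close>

definition mobius_lift_complex :: "real \<Rightarrow> complex \<Rightarrow> complex" where
  "mobius_lift_complex r z =
     z + \<i> * (Ln (1 - of_real r * exp (\<i> * z)) - Ln (1 - of_real r * exp (- (\<i> * z))))"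

lemma mobius_lift_complex_of_real:
  assumes "\<bar>r\<bar> < 1"
  shows "mobius_lift_complex r (of_real t) = of_real (mobius_lift r t)"
proof -
  define w where "w = 1 - of_real r * cis t"
  have exp_cis: "exp (\<i> * of_real t) = cis t" "exp (- (\<i> * of_real t)) = cis (- t)"
    by (simp_all add: cis_conv_exp)
  have Re_w: "0 < Re w"
    using Re_one_minus_mult_cis_pos[OF assms] by (simp add: w_def)
  then have "Ln (cnj w) = cnj (Ln w)"
    by (intro cnj_Ln[symmetric]) (auto simp: complex_nonpos_Reals_iff)
  moreover have cnj_w: "1 - of_real r * cis (- t) = cnj w"
    by (simp add: w_def complex_eq_iff)
  moreover have "Im (Ln w) = arctan (Im w / Re w)"
    using Re_w Arg_eq_Im_Ln[of w] arg_conv_arctan[OF Re_w] by fastforce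
  moreover have "Im w = - (r * sin t)" "Re w = 1 - r * cos t"
    by (simp_all add: w_def)
  ultimately show ?thesis
    unfolding mobius_lift_complex_def mobius_lift_def exp_cis cnj_w w_def[symmetric]
    by (simp add: complex_eq_iff arctan_minus)
qed

lemma has_holomorphic_extension_mobius_lift:
  assumes "\<bar>r\<bar> < 1"
  shows "has_holomorphic_extension (mobius_lift r)"
proof -
  define S where "S = {z. 0 < Re (1 - of_real r * exp (\<i> * z))}
    \<inter> {z. 0 < Re (1 - of_real r * exp (- (\<i> * z)))}"
  have "open S"
    unfolding S_def by (intro open_Int open_Collect_less continuous_intros)
  moreover have "\<real> \<subseteq> S"
    using Re_one_minus_mult_cis_pos[OF assms] Re_one_minus_mult_cis_pos[OF assms, of "- _"]
    by (auto simp: S_def cis_conv_exp elim!: Reals_cases)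
  moreover have "mobius_lift_complex r holomorphic_on S"
    unfolding mobius_lift_complex_def S_def
    by (auto intro!: holomorphic_intros simp: complex_nonpos_Reals_iff)
  ultimately show ?thesis
    unfolding has_holomorphic_extension_def
    using mobius_lift_complex_of_real[OF assms] by blast
qed

lemma cis_mobius_lift:
  assumes "\<bar>r\<bar> < 1"
  shows "cis (mobius_lift r t) = (cis t - of_real r) / (1 - of_real r * cis t)"
proof -
  define w where "w = 1 - of_real r * cis t"
  define w' where "w' = 1 - of_real r * cis (- t)"
  have "0 < Re w" "0 < Re w'"
    using Re_one_minus_mult_cis_pos[OF assms] by (simp_all add: w_def w'_def)
  then have "w \<noteq> 0" "w' \<noteq> 0"
    by auto
  have "cis (mobius_lift r t) = exp (\<i> * mobius_lift_complex r (of_real t))"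
    by (simp add: mobius_lift_complex_of_real[OF assms] cis_conv_exp)
  also have "\<dots> = cis t * w' / w"
    using \<open>w \<noteq> 0\<close> \<open>w' \<noteq> 0\<close>
    by (simp add: mobius_lift_complex_def w_def w'_def cis_conv_exp algebra_simps exp_add exp_diff)
  also have "cis t * w' = cis t - of_real r"
    by (simp add: w'_def algebra_simps cis_mult)
  finally show ?thesis by (simp add: w_def)
qed

lemma mobius_lift_minus_id_bound: "\<bar>mobius_lift r t - t\<bar> < pi"
  using arctan_bounded[of "r * sin t / (1 - r * cos t)"] by (auto simp: mobius_lift_def abs_less_iff)

lemma mobius_inverse_eq:
  fixes c r :: complex
  assumes "1 - r * c \<noteq> 0" and "1 - r\<^sup>2 \<noteq> 0"
  shows "((c - r) / (1 - r * c) + r) / (1 + r * ((c - r) / (1 - r * c))) = c"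
proof -
  have "(c - r) / (1 - r * c) + r = c * (1 - r\<^sup>2) / (1 - r * c)"
    "1 + r * ((c - r) / (1 - r * c)) = (1 - r\<^sup>2) / (1 - r * c)"
    using assms(1) by (simp_all add: field_simps power2_eq_square)
  with assms show ?thesis by simp
qed

lemma mobius_lift_inverse:
  assumes "\<bar>r\<bar> < 1"
  shows "mobius_lift (- r) (mobius_lift r t) = t"
proof -
  define d where "d = mobius_lift (- r) (mobius_lift r t) - t"
  have "norm (of_real r * cis t) < 1"
    using assms by (simp add: norm_mult)
  then have "1 - of_real r * cis t \<noteq> 0"
    by auto
  moreover have "r\<^sup>2 \<noteq> 1"
    using assms by (auto simp: power2_eq_1_iff)
  then have "1 - (of_real r)\<^sup>2 \<noteq> (0 :: complex)"
    by (simp flip: of_real_power)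
  ultimately have "cis (mobius_lift (- r) (mobius_lift r t)) = cis t"
  proof -
    have "cis (mobius_lift (- r) (mobius_lift r t))
        = (cis (mobius_lift r t) + of_real r) / (1 + of_real r * cis (mobius_lift r t))"
      using cis_mobius_lift[of "- r"] assms by simp
    also have "\<dots> = cis t"
      unfolding cis_mobius_lift[OF assms] by (rule mobius_inverse_eq) fact+
    finally show ?thesis .
  qed
  then have "cis d = 1"
    using cis_divide[of "mobius_lift (- r) (mobius_lift r t)" t] by (simp add: d_def)
  then have "cos d = 1"
    by (simp add: complex_eq_iff)
  then obtain k :: int where k: "d = of_int k * 2 * pi"
    using cos_one_2pi_int by blast
  have "\<bar>d\<bar> < 2 * pi"
    using mobius_lift_minus_id_bound[of "- r" "mobius_lift r t"] mobius_lift_minus_id_bound[of r t]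
    unfolding d_def by linarith
  with k have "k = 0"
    by (simp add: abs_mult)
  with k show ?thesis by (simp add: d_def)
qed

lemma mobius_lift_periodic: "mobius_lift r (t + 2 * pi * of_int j) = mobius_lift r t + 2 * pi * of_int j"
  by (simp add: mobius_lift_def sin_add cos_add)

lemma mobius_lift_minus: "mobius_lift r (- t) = - mobius_lift r t"
  by (simp add: mobius_lift_def arctan_minus)

lemma continuous_on_mobius_lift:
  assumes "\<bar>r\<bar> < 1"
  shows "continuous_on UNIV (mobius_lift r)"
  unfolding mobius_lift_def using mult_cos_less_one[OF assms]
  by (intro continuous_intros) (auto simp: less_imp_neq)

lemma strict_mono_mobius_lift:
  assumes "\<bar>r\<bar> < 1"
  shows "strict_mono (mobius_lift r)"
proof (rule continuous_inj_imp_strict_mono[OF continuous_on_mobius_lift[OF assms] _ pi_gt_zero])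
  show "inj (mobius_lift r)"
    by (rule inj_on_inverseI[where g = "mobius_lift (- r)"]) (simp add: mobius_lift_inverse[OF assms])
  show "mobius_lift r 0 < mobius_lift r pi"
    by (simp add: mobius_lift_def)
qed

lemma mobius_lift_one:
  assumes "0 < t" and "t < 2 * pi"
  shows "mobius_lift 1 t = pi"
proof -
  define s where "s = t / 2"
  have s: "0 < s" "s < pi" and t: "t = 2 * s"
    using assms by (simp_all add: s_def)
  then have "sin s > 0"
    by (simp add: sin_gt_zero)
  then have "sin t / (1 - cos t) = tan (pi / 2 - s)"
    by (simp add: t sin_double cos_double_sin tan_cot' cot_def power2_eq_square)
  moreover have "arctan (tan (pi / 2 - s)) = pi / 2 - s"
    using s by (intro arctan_tan) auto
  ultimately show ?thesis
    by (simp add: mobius_lift_def t)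
qed

lemma exists_mobius_lift_gt:
  assumes "0 < t" and "t < 2 * pi" and "0 < e"
  obtains r where "0 < r" and "r < 1" and "pi - e < mobius_lift r t"
proof -
  have "cos t \<noteq> 1"
  proof
    assume "cos t = 1"
    then obtain k :: int where "t = of_int k * 2 * pi"
      using cos_one_2pi_int by blast
    with assms(1,2) have "0 < real_of_int k" "real_of_int k < 1"
      by (simp_all add: zero_less_mult_iff)
    then have "0 < k" "k < 1"
      by simp_all
    then show False by simp
  qed
  then have "isCont (\<lambda>r. mobius_lift r t) 1"
    unfolding mobius_lift_def by (intro continuous_intros) simp
  then have "((\<lambda>r. mobius_lift r t) \<longlongrightarrow> pi) (at_left 1)"
    unfolding isCont_def mobius_lift_one[OF assms(1,2)] by (rule tendsto_mono[OF at_le, rotated]) simp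
  then have "eventually (\<lambda>r. pi - e < mobius_lift r t) (at_left 1)"
    by (rule order_tendstoD) (simp add: assms(3))
  moreover have "eventually (\<lambda>r. 0 < r \<and> r < 1) (at_left (1 :: real))"
    using eventually_at_left_real[of 0 1] by simp
  ultimately have "eventually (\<lambda>r. 0 < r \<and> r < 1 \<and> pi - e < mobius_lift r t) (at_left 1)"
    by eventually_elim auto
  with that show ?thesis
    using eventually_happens'[OF trivial_limit_at_left_real] by blast
qed

section \<open>The analytic ping-pong action\<close>

definition holomorphic_diffeos :: "(real \<Rightarrow> real) set" where
  "holomorphic_diffeos = {f. bij f \<and> strict_mono f \<and> has_holomorphic_extension f
      \<and> has_holomorphic_extension (Hilbert_Choice.inv f)}"

lemma holomorphic_diffeos_subset_Diff_omega_plus_R: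
  "holomorphic_diffeos \<subseteq> carrier Diff_omega_plus_R"
  by (auto simp: holomorphic_diffeos_def Diff_omega_plus_R_def has_holomorphic_extension_imp_real_analytic)

lemma holomorphic_diffeos_pairI:
  assumes "f \<circ> g = id" "g \<circ> f = id" "strict_mono f"
    and "has_holomorphic_extension f" "has_holomorphic_extension g"
  shows "f \<in> holomorphic_diffeos" and "g \<in> holomorphic_diffeos"
proof -
  have "strict_mono g"
    using strict_mono_inv[OF assms(3) comp_eq_id_imp_surj[OF assms(1)]] assms(2)
    by (simp add: pointfree_idE)
  with assms show "f \<in> holomorphic_diffeos" "g \<in> holomorphic_diffeos"
    using o_bij[OF assms(2,1)] o_bij[OF assms(1,2)] inv_unique_comp[OF assms(1,2)]
      inv_unique_comp[OF assms(2,1)]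
    by (simp_all add: holomorphic_diffeos_def)
qed

lemma comp_in_holomorphic_diffeos:
  "f \<in> holomorphic_diffeos \<Longrightarrow> g \<in> holomorphic_diffeos \<Longrightarrow> f \<circ> g \<in> holomorphic_diffeos"
  by (auto simp: holomorphic_diffeos_def bij_comp strict_mono_o o_inv_distrib
      has_holomorphic_extension_compose)

lemma translation_in_holomorphic_diffeos: "(\<lambda>x. x + c) \<in> holomorphic_diffeos"
  using holomorphic_diffeos_pairI(1)[of "\<lambda>x. x + c" "\<lambda>x. x - c"]
    has_holomorphic_extension_affine[of 1 c] has_holomorphic_extension_affine[of 1 "- c"]
  by (simp add: fun_eq_iff strict_mono_def)

lemma id_in_holomorphic_diffeos: "id \<in> holomorphic_diffeos"
  using translation_in_holomorphic_diffeos[of 0] by (simp add: id_def)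

lemma word_action_in_holomorphic_diffeos:
  "(\<And>l. g l \<in> holomorphic_diffeos) \<Longrightarrow> word_action g w \<in> holomorphic_diffeos"
  by (induction w) (simp_all add: id_in_holomorphic_diffeos comp_in_holomorphic_diffeos)

lemma line_action_in_holomorphic_diffeos:
  "f \<in> holomorphic_diffeos \<Longrightarrow> f' \<in> holomorphic_diffeos
    \<Longrightarrow> line_action f f' l \<in> holomorphic_diffeos"
  using translation_in_holomorphic_diffeos by (cases l; cases "snd l") auto

text \<open>The Moebius lift, rescaled to have period \<open>m\<close> in the source and \<open>n\<close> in the target:
  \<open>m/2\<close> goes to its attracting fixed point \<open>\<pi>\<close>, which goes to \<open>1/2\<close>.\<close>

definition a_map :: "nat \<Rightarrow> nat \<Rightarrow> real \<Rightarrow> real \<Rightarrow> real" where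
  "a_map m n r x = real n / (2 * pi) * mobius_lift r (2 * pi * x / real m) + (1 - real n) / 2"

definition a_map_inv :: "nat \<Rightarrow> nat \<Rightarrow> real \<Rightarrow> real \<Rightarrow> real" where
  "a_map_inv m n r y = real m / (2 * pi) * mobius_lift (- r) (2 * pi * (y - (1 - real n) / 2) / real n)"

lemma a_map_a_map_inv:
  assumes "1 \<le> m" "1 \<le> n" "\<bar>r\<bar> < 1"
  shows "a_map m n r (a_map_inv m n r y) = y"
proof -
  define s where "s = 2 * pi * (y - (1 - real n) / 2) / real n"
  have "2 * pi * a_map_inv m n r y / real m = mobius_lift (- r) s"
    using assms by (simp add: a_map_inv_def s_def)
  then have "a_map m n r (a_map_inv m n r y) = real n / (2 * pi) * s + (1 - real n) / 2"
    using mobius_lift_inverse[of "- r" s] assms by (simp add: a_map_def)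
  also have "\<dots> = y"
    using assms by (simp add: s_def)
  finally show ?thesis .
qed

lemma a_map_inv_a_map:
  assumes "1 \<le> m" "1 \<le> n" "\<bar>r\<bar> < 1"
  shows "a_map_inv m n r (a_map m n r x) = x"
proof -
  define s where "s = 2 * pi * x / real m"
  have "2 * pi * (a_map m n r x - (1 - real n) / 2) / real n = mobius_lift r s"
    using assms by (simp add: a_map_def s_def)
  then have "a_map_inv m n r (a_map m n r x) = real m / (2 * pi) * s"
    using mobius_lift_inverse[OF assms(3), of s] by (simp add: a_map_inv_def)
  also have "\<dots> = x"
    using assms by (simp add: s_def)
  finally show ?thesis .
qed

lemma a_map_shift:
  assumes "1 \<le> m"
  shows "a_map m n r (x + of_int j * real m) = a_map m n r x + of_int j * real n"
proof -
  have "2 * pi * (x + of_int j * real m) / real m = 2 * pi * x / real m + 2 * pi * of_int j"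
    using assms by (simp add: field_simps)
  then have "a_map m n r (x + of_int j * real m)
      = real n / (2 * pi) * (mobius_lift r (2 * pi * x / real m) + 2 * pi * of_int j) + (1 - real n) / 2"
    by (simp only: a_map_def mobius_lift_periodic)
  then show ?thesis
    by (simp add: a_map_def field_simps)
qed

lemma strict_mono_a_map:
  assumes "1 \<le> m" "1 \<le> n" "\<bar>r\<bar> < 1"
  shows "strict_mono (a_map m n r)"
proof (rule strict_monoI)
  fix x y :: real assume "x < y"
  with assms have "mobius_lift r (2 * pi * x / real m) < mobius_lift r (2 * pi * y / real m)"
    using strict_mono_mobius_lift[OF assms(3)] by (simp add: strict_mono_less divide_strict_right_mono)
  with assms have "real n / (2 * pi) * mobius_lift r (2 * pi * x / real m)
      < real n / (2 * pi) * mobius_lift r (2 * pi * y / real m)"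
    by (intro mult_strict_left_mono) simp_all
  then show "a_map m n r x < a_map m n r y"
    unfolding a_map_def by linarith
qed

lemma has_holomorphic_extension_a_map:
  assumes "\<bar>r\<bar> < 1"
  shows "has_holomorphic_extension (a_map m n r)"
proof -
  have "a_map m n r = (\<lambda>x. real n / (2 * pi) * x + (1 - real n) / 2) \<circ> mobius_lift r
      \<circ> (\<lambda>x. 2 * pi / real m * x + 0)"
    by (simp add: fun_eq_iff a_map_def)
  then show ?thesis
    by (simp only:) (intro has_holomorphic_extension_compose has_holomorphic_extension_affine
        has_holomorphic_extension_mobius_lift assms)
qed

lemma has_holomorphic_extension_a_map_inv:
  assumes "1 \<le> n" and "\<bar>r\<bar> < 1"
  shows "has_holomorphic_extension (a_map_inv m n r)"
proof -
  have "a_map_inv m n r = (\<lambda>x. real m / (2 * pi) * x + 0) \<circ> mobius_lift (- r)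
      \<circ> (\<lambda>x. 2 * pi / real n * x + (- (2 * pi / real n) * ((1 - real n) / 2)))"
  proof -
    have "2 * pi * (y - (1 - real n) / 2) / real n
        = 2 * pi / real n * y + (- (2 * pi / real n) * ((1 - real n) / 2))" for y
      using assms(1) by (simp add: field_simps)
    then show ?thesis
      by (simp add: fun_eq_iff a_map_inv_def)
  qed
  moreover have "\<bar>- r\<bar> < 1"
    using assms(2) by simp
  ultimately show ?thesis
    by (simp only:) (intro has_holomorphic_extension_compose has_holomorphic_extension_affine
        has_holomorphic_extension_mobius_lift)
qed

lemma a_map_middle:
  assumes m: "1 \<le> m" and n: "1 \<le> n" and r: "\<bar>r\<bar> < 1"
    and near_pi: "pi - pi / (4 * real n) < mobius_lift r (pi / (4 * real m))"
    and t: "1/8 \<le> t" "t \<le> real m - 1/8"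
  shows "\<bar>a_map m n r t - 1/2\<bar> < 1/8"
proof -
  define A where "A = real n / (2 * pi) * mobius_lift r (pi / (4 * real m))"
  define a where "a = a_map m n r (1/8)"
  have a_eq: "a = A + (1 - real n) / 2"
    by (simp add: a_def a_map_def A_def)
  have "real n / 2 - 1/8 = real n / (2 * pi) * (pi - pi / (4 * real n))"
    using n by (simp add: field_simps)
  also have "\<dots> < A"
    using near_pi n unfolding A_def by (intro mult_strict_left_mono) auto
  finally have "3/8 < a"
    unfolding a_eq by (simp add: field_simps)
  \<comment> \<open>The Moebius lift is odd and \<open>2\<pi>\<close>-periodic, so \<open>a_map\<close> is symmetric about \<open>m/2\<close>.\<close>
  have reflect: "2 * pi * (real m - 1/8) / real m = - (pi / (4 * real m)) + 2 * pi * of_int 1"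
    using m by (simp add: field_simps)
  have "mobius_lift r (2 * pi * (real m - 1/8) / real m) = 2 * pi - mobius_lift r (pi / (4 * real m))"
    unfolding reflect mobius_lift_periodic mobius_lift_minus by simp
  then have "a_map m n r (real m - 1/8)
      = real n / (2 * pi) * (2 * pi - mobius_lift r (pi / (4 * real m))) + (1 - real n) / 2"
    by (simp only: a_map_def)
  also have "\<dots> = 1 - a"
    unfolding a_eq A_def by (simp add: field_simps)
  finally have "a_map m n r (real m - 1/8) = 1 - a" .
  moreover have "a \<le> a_map m n r t" "a_map m n r t \<le> a_map m n r (real m - 1/8)"
    using t strict_mono_a_map[OF m n r] unfolding a_def by (simp_all add: strict_mono_less_eq)
  ultimately show ?thesis
    using \<open>3/8 < a\<close> by linarith
qed

lemma a_map_ping_pong: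
  assumes m: "1 \<le> m" and n: "1 \<le> n" and r: "\<bar>r\<bar> < 1"
    and near_pi: "pi - pi / (4 * real n) < mobius_lift r (pi / (4 * real m))"
    and x: "\<not> ping_pong_set m n False x"
  shows "ping_pong_set m n True (a_map m n r x)"
proof -
  define j where "j = \<lfloor>x / real m\<rfloor>"
  define t where "t = x - of_int j * real m"
  have far: "\<not> \<bar>x - of_int i\<bar> < 1/8" if "int m dvd i" for i
    using x that unfolding ping_pong_set_def by auto
  have "of_int j \<le> x / real m" "x / real m < of_int j + 1"
    unfolding j_def by linarith+
  then have "0 \<le> t" "t < real m"
    using m by (simp_all add: t_def field_simps)
  moreover have "\<not> \<bar>x - of_int (j * int m)\<bar> < 1/8" "\<not> \<bar>x - of_int ((j + 1) * int m)\<bar> < 1/8"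
    using far[of "j * int m"] far[of "(j + 1) * int m"] by simp_all
  ultimately have "1/8 \<le> t" "t \<le> real m - 1/8"
    by (auto simp: t_def algebra_simps)
  then have "\<bar>a_map m n r t - 1/2\<bar> < 1/8"
    by (rule a_map_middle[OF m n r near_pi])
  moreover have "a_map m n r x = a_map m n r t + of_int (j * int n)"
    using a_map_shift[OF m, of n r t j] by (simp add: t_def)
  ultimately show ?thesis
    unfolding ping_pong_set_def by (intro exI[of _ "j * int n"]) simp
qed

lemma a_map_in_holomorphic_diffeos:
  assumes "1 \<le> m" "1 \<le> n" "\<bar>r\<bar> < 1"
  shows "a_map m n r \<in> holomorphic_diffeos" and "a_map_inv m n r \<in> holomorphic_diffeos"
proof -
  have "a_map m n r \<circ> a_map_inv m n r = id" "a_map_inv m n r \<circ> a_map m n r = id"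
    using a_map_a_map_inv[OF assms] a_map_inv_a_map[OF assms] by (simp_all add: fun_eq_iff)
  from holomorphic_diffeos_pairI[OF this strict_mono_a_map[OF assms]
      has_holomorphic_extension_a_map[OF assms(3)] has_holomorphic_extension_a_map_inv[OF assms(2,3)]]
  show "a_map m n r \<in> holomorphic_diffeos" "a_map_inv m n r \<in> holomorphic_diffeos" .
qed

lemma exists_holomorphic_faithful_BS_action:
  assumes m: "1 \<le> m" and n: "1 \<le> n"
  obtains g where "faithful_BS_action m n g" and "\<And>l. g l \<in> holomorphic_diffeos"
proof -
  have "0 < pi / (4 * real m)" "pi / (4 * real m) < 2 * pi" "0 < pi / (4 * real n)"
    using m n by (simp_all add: field_simps)
  then obtain r where "0 < r" "r < 1"
    and near_pi: "pi - pi / (4 * real n) < mobius_lift r (pi / (4 * real m))"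
    by (rule exists_mobius_lift_gt)
  then have r: "\<bar>r\<bar> < 1" by simp
  have "faithful_BS_action m n (line_action (a_map m n r) (a_map_inv m n r))"
  proof (rule faithful_BS_action_line_action)
    show "a_map m n r \<circ> a_map_inv m n r = id" "a_map_inv m n r \<circ> a_map m n r = id"
      using a_map_a_map_inv[OF m n r] a_map_inv_a_map[OF m n r] by (simp_all add: fun_eq_iff)
    show "a_map m n r (x + real m) = a_map m n r x + real n" for x
      using a_map_shift[OF m, of n r x 1] by simp
  qed (rule a_map_ping_pong[OF m n r near_pi])
  moreover have "line_action (a_map m n r) (a_map_inv m n r) l \<in> holomorphic_diffeos" for l
    using a_map_in_holomorphic_diffeos[OF m n r] by (rule line_action_in_holomorphic_diffeos)
  ultimately show ?thesis using that by blast
qed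

section \<open>Transfer to the interval\<close>

definition to_unit_interval :: "real \<Rightarrow> real" where
  "to_unit_interval x = 1/2 + arctan x / pi"

definition from_unit_interval :: "real \<Rightarrow> real" where
  "from_unit_interval t = tan (pi * (t - 1/2))"

lemma to_unit_interval_bounds: "0 < to_unit_interval x" "to_unit_interval x < 1"
  using arctan_bounded[of x] by (simp_all add: to_unit_interval_def field_simps)

lemma from_to_unit_interval [simp]: "from_unit_interval (to_unit_interval x) = x"
  by (simp add: to_unit_interval_def from_unit_interval_def algebra_simps tan_arctan)

lemma to_from_unit_interval:
  assumes "0 < t" "t < 1"
  shows "to_unit_interval (from_unit_interval t) = t"
proof -
  have "arctan (tan (pi * (t - 1/2))) = pi * (t - 1/2)"
    using assms by (intro arctan_tan) (simp_all add: field_simps)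
  then show ?thesis
    by (simp add: to_unit_interval_def from_unit_interval_def)
qed

lemma strict_mono_to_unit_interval: "strict_mono to_unit_interval"
  by (rule strict_monoI) (simp add: to_unit_interval_def arctan_less_iff divide_strict_right_mono)

lemma from_unit_interval_less:
  assumes "0 < s" "s < t" "t < 1"
  shows "from_unit_interval s < from_unit_interval t"
  unfolding from_unit_interval_def using assms by (intro tan_monotone) (simp_all add: field_simps)

definition interval_conj :: "(real \<Rightarrow> real) \<Rightarrow> real \<Rightarrow> real" where
  "interval_conj f t = (if 0 < t \<and> t < 1 then to_unit_interval (f (from_unit_interval t)) else t)"

lemma interval_conj_bounds:
  "0 < t \<Longrightarrow> t < 1 \<Longrightarrow> 0 < interval_conj f t \<and> interval_conj f t < 1"
  by (simp add: interval_conj_def to_unit_interval_bounds)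

lemma interval_conj_outside: "\<not> (0 < t \<and> t < 1) \<Longrightarrow> interval_conj f t = t"
  unfolding interval_conj_def by argo

lemma interval_conj_comp: "interval_conj (f \<circ> g) = interval_conj f \<circ> interval_conj g"
proof
  fix t
  show "interval_conj (f \<circ> g) t = (interval_conj f \<circ> interval_conj g) t"
  proof (cases "0 < t \<and> t < 1")
    case True
    with interval_conj_bounds[of t g] show ?thesis
      by (simp add: interval_conj_def)
  qed (simp add: interval_conj_outside)
qed

lemma interval_conj_id: "interval_conj id = id"
  by (auto simp: interval_conj_def to_from_unit_interval)

lemma inj_interval_conj: "inj interval_conj"
proof (rule injI)
  fix f g assume eq: "interval_conj f = interval_conj g"
  show "f = g"
  proof
    fix x
    have "interval_conj f (to_unit_interval x) = interval_conj g (to_unit_interval x)"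
      using eq by simp
    then have "to_unit_interval (f x) = to_unit_interval (g x)"
      by (simp add: interval_conj_def to_unit_interval_bounds)
    then show "f x = g x"
      using strict_mono_eq[OF strict_mono_to_unit_interval] by simp
  qed
qed

lemma strict_mono_interval_conj:
  assumes "strict_mono f"
  shows "strict_mono (interval_conj f)"
proof (rule strict_monoI)
  fix s t :: real assume "s < t"
  consider "0 < s" "t < 1" | "s \<le> 0" | "1 \<le> t"
    by linarith
  then show "interval_conj f s < interval_conj f t"
  proof cases
    case 1
    with \<open>s < t\<close> have "f (from_unit_interval s) < f (from_unit_interval t)"
      using from_unit_interval_less assms by (simp add: strict_mono_less)
    with 1 \<open>s < t\<close> show ?thesis
      using strict_mono_to_unit_interval by (simp add: interval_conj_def strict_mono_less)
  next
    case 2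
    have "s < interval_conj f t"
    proof (cases "0 < t \<and> t < 1")
      case True
      with 2 show ?thesis using interval_conj_bounds[of t f] by linarith
    qed (use \<open>s < t\<close> interval_conj_outside in simp)
    with 2 show ?thesis by (simp add: interval_conj_outside)
  next
    case 3
    have "interval_conj f s < t"
    proof (cases "0 < s \<and> s < 1")
      case True
      with 3 show ?thesis using interval_conj_bounds[of s f] by linarith
    qed (use \<open>s < t\<close> interval_conj_outside in simp)
    with 3 show ?thesis by (simp add: interval_conj_outside)
  qed
qed

lemma surj_interval_conj:
  assumes "surj f"
  shows "surj (interval_conj f)"
proof -
  have "interval_conj f \<circ> interval_conj (Hilbert_Choice.inv f) = id"
    using assms by (simp add: surj_iff interval_conj_id flip: interval_conj_comp)
  then show ?thesis
    by (rule comp_eq_id_imp_surj)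
qed

lemma interval_conj_in_Homeo_plus_I:
  assumes "strict_mono f" and "surj f"
  shows "interval_conj f \<in> carrier Homeo_plus_I"
proof -
  define g where "g = Hilbert_Choice.inv f"
  note g = strict_mono_surj_inv[OF assms, folded g_def]
  have inverse: "interval_conj f (interval_conj g t) = t" "interval_conj g (interval_conj f t) = t" for t
    using g(1,2) by (simp_all add: pointfree_idE interval_conj_id flip: interval_conj_comp)
  have maps_into: "interval_conj h t \<in> {0..1}" if "t \<in> {0..1}" for h t
    using that interval_conj_bounds[of t h] interval_conj_outside[of t h] by fastforce
  have "homeomorphism {0..1} {0..1} (interval_conj f) (interval_conj g)"
  proof
    have "continuous_on UNIV (interval_conj f)" "continuous_on UNIV (interval_conj g)"
      using assms g(3,4) by (simp_all add: strict_mono_surj_imp_continuous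
          strict_mono_interval_conj surj_interval_conj)
    then show "continuous_on {0..1} (interval_conj f)" "continuous_on {0..1} (interval_conj g)"
      using continuous_on_subset[OF _ subset_UNIV] by blast+
  qed (use inverse maps_into in auto)
  moreover have "strict_mono_on {0..1} (interval_conj f)"
    using strict_mono_interval_conj[OF assms(1)] by (simp add: strict_mono_on_def strict_mono_def)
  ultimately show ?thesis
    by (auto simp: Homeo_plus_I_def interval_conj_outside)
qed

section \<open>Transfer to the circle\<close>

lemma continuous_on_compact_surj_factor:
  fixes f :: "'a::t2_space \<Rightarrow> 'b::t2_space" and g :: "'b \<Rightarrow> 'c::topological_space"
  assumes "compact S" and "continuous_on S f" and "f ` S = T" and "continuous_on S (g \<circ> f)"
  shows "continuous_on T g"
  unfolding continuous_openin_preimage_eq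
proof (intro allI impI)
  fix U :: "'c set" assume "open U"
  have "S \<inter> f -` (T \<inter> g -` U) = S \<inter> (g \<circ> f) -` U"
    using assms(3) by auto
  with continuous_openin_preimage_gen[OF assms(4) \<open>open U\<close>]
  have "openin (top_of_set S) (S \<inter> f -` (T \<inter> g -` U))"
    by simp
  then show "openin (top_of_set T) (T \<inter> g -` U)"
    using Abstract_Topology_2.continuous_imp_quotient_map[OF assms(2,3,1), of "T \<inter> g -` U"] by blast
qed

lemma cis_in_circle [simp]: "cis t \<in> circle"
  by (simp add: circle_def)

lemma Arg2pi_cis_2pi:
  assumes "0 \<le> t" "t < 1"
  shows "Arg2pi (cis (2 * pi * t)) = 2 * pi * t"
  by (rule Arg2pi_unique[of 1]) (use assms in \<open>auto simp: cis_conv_exp\<close>)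

lemma cis_Arg2pi_circle:
  assumes "z \<in> circle"
  shows "cis (Arg2pi z) = z"
proof -
  have "is_Arg z (Arg2pi z)"
    using Arg2pi by blast
  with assms show ?thesis
    by (simp add: is_Arg_def circle_def cis_conv_exp)
qed

lemma cis_2pi_add_of_int: "cis (2 * pi * (t + of_int k)) = cis (2 * pi * t)"
proof -
  have "cis (2 * pi * of_int k) = 1"
    by (simp add: complex_eq_iff)
  then show ?thesis
    by (simp add: distrib_left flip: cis_mult)
qed

text \<open>For an increasing homeomorphism \<open>u\<close> of \<open>[0,1]\<close>, \<open>circle_map u\<close> is the induced
  homeomorphism of the circle \<open>\<real>/\<int>\<close> and \<open>circle_lift u\<close> is its lift to \<open>\<real>\<close>.\<close>

definition circle_lift :: "(real \<Rightarrow> real) \<Rightarrow> real \<Rightarrow> real" where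
  "circle_lift u t = of_int \<lfloor>t\<rfloor> + u (frac t)"

definition circle_map :: "(real \<Rightarrow> real) \<Rightarrow> complex \<Rightarrow> complex" where
  "circle_map u z = (if z \<in> circle then cis (2 * pi * u (Arg2pi z / (2 * pi))) else z)"

lemma circle_map_cis: "circle_map u (cis (2 * pi * t)) = cis (2 * pi * circle_lift u t)"
proof -
  have "cis (2 * pi * t) = cis (2 * pi * frac t)"
    using cis_2pi_add_of_int[of "frac t" "\<lfloor>t\<rfloor>"] by (simp add: frac_def)
  moreover have "Arg2pi (cis (2 * pi * frac t)) = 2 * pi * frac t"
    by (rule Arg2pi_cis_2pi) (simp_all add: frac_lt_1)
  ultimately show ?thesis
    using cis_2pi_add_of_int[of "u (frac t)" "\<lfloor>t\<rfloor>"] by (simp add: circle_map_def circle_lift_def add.commute)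
qed

lemma circle_map_comp:
  assumes "\<And>t. 0 \<le> t \<Longrightarrow> t < 1 \<Longrightarrow> 0 \<le> v t \<and> v t < 1"
  shows "circle_map (u \<circ> v) = circle_map u \<circ> circle_map v"
proof
  fix z
  show "circle_map (u \<circ> v) z = (circle_map u \<circ> circle_map v) z"
  proof (cases "z \<in> circle")
    case True
    define s where "s = Arg2pi z / (2 * pi)"
    have "0 \<le> s" "s < 1"
      using Arg2pi[of z] by (auto simp: s_def)
    with assms have "Arg2pi (cis (2 * pi * v s)) = 2 * pi * v s"
      by (simp add: Arg2pi_cis_2pi)
    with True show ?thesis
      by (simp add: circle_map_def s_def)
  qed (simp add: circle_map_def)
qed

lemma circle_map_id: "circle_map id = id"
  by (simp add: fun_eq_iff circle_map_def cis_Arg2pi_circle)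

lemma circle_map_eq_imp_eq:
  assumes "circle_map u = circle_map v"
    and "\<And>t. 0 \<le> t \<Longrightarrow> t < 1 \<Longrightarrow> 0 \<le> u t \<and> u t < 1"
    and "\<And>t. 0 \<le> t \<Longrightarrow> t < 1 \<Longrightarrow> 0 \<le> v t \<and> v t < 1"
    and "0 \<le> t" "t < 1"
  shows "u t = v t"
proof -
  have "circle_map w (cis (2 * pi * t)) = cis (2 * pi * w t)" for w
    using assms(4,5) by (simp add: circle_map_def Arg2pi_cis_2pi)
  with assms(1) have "cis (2 * pi * u t) = cis (2 * pi * v t)"
    by metis
  then have "Arg2pi (cis (2 * pi * u t)) = Arg2pi (cis (2 * pi * v t))"
    by simp
  with assms(2-5) show ?thesis
    by (simp add: Arg2pi_cis_2pi)
qed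

lemma circle_lift_add_1: "circle_lift u (t + 1) = circle_lift u t + 1"
  by (simp add: circle_lift_def frac_1_eq)

lemma circle_lift_comp:
  assumes "\<And>t. 0 \<le> t \<Longrightarrow> t < 1 \<Longrightarrow> 0 \<le> v t \<and> v t < 1"
  shows "circle_lift (u \<circ> v) = circle_lift u \<circ> circle_lift v"
proof
  fix t
  have "0 \<le> v (frac t)" "v (frac t) < 1"
    using assms[of "frac t"] by (simp_all add: frac_lt_1)
  then have "\<lfloor>circle_lift v t\<rfloor> = \<lfloor>t\<rfloor>" "frac (circle_lift v t) = v (frac t)"
    by (simp_all add: circle_lift_def floor_eq_iff frac_def)
  then show "circle_lift (u \<circ> v) t = (circle_lift u \<circ> circle_lift v) t"
    by (simp add: circle_lift_def)
qed

lemma circle_lift_id: "circle_lift id = id"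
  by (simp add: fun_eq_iff circle_lift_def frac_def)

lemma strict_mono_circle_lift:
  assumes "strict_mono u" "u 0 = 0" "u 1 = 1"
  shows "strict_mono (circle_lift u)"
proof (rule strict_monoI)
  fix s t :: real assume "s < t"
  then have "\<lfloor>s\<rfloor> \<le> \<lfloor>t\<rfloor>"
    by (simp add: floor_mono)
  show "circle_lift u s < circle_lift u t"
  proof (cases "\<lfloor>s\<rfloor> = \<lfloor>t\<rfloor>")
    case True
    with \<open>s < t\<close> have "u (frac s) < u (frac t)"
      using assms(1) by (simp add: frac_def strict_mono_less)
    with True show ?thesis
      by (simp add: circle_lift_def)
  next
    case False
    with \<open>\<lfloor>s\<rfloor> \<le> \<lfloor>t\<rfloor>\<close> have "of_int \<lfloor>s\<rfloor> + 1 \<le> (of_int \<lfloor>t\<rfloor> :: real)"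
      by simp
    moreover have "u (frac s) < 1" "0 \<le> u (frac t)"
      using assms strict_mono_less[of u "frac s" 1] strict_mono_less_eq[of u 0 "frac t"]
      by (simp_all add: frac_lt_1)
    ultimately show ?thesis
      by (simp add: circle_lift_def)
  qed
qed

lemma continuous_on_circle_map:
  assumes "continuous_on UNIV (circle_lift u)"
  shows "continuous_on circle (circle_map u)"
proof (rule continuous_on_compact_surj_factor[of "{0..1}" "\<lambda>t. cis (2 * pi * t)"])
  show "continuous_on {0..1} (\<lambda>t. cis (2 * pi * t))"
    unfolding cis_conv_exp by (intro continuous_intros)
  show "(\<lambda>t. cis (2 * pi * t)) ` {0..1} = circle"
  proof (intro equalityI subsetI)
    fix z assume "z \<in> circle"
    moreover have "Arg2pi z / (2 * pi) \<in> {0..1}"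
      using Arg2pi[of z] by auto
    ultimately show "z \<in> (\<lambda>t. cis (2 * pi * t)) ` {0..1}"
      using cis_Arg2pi_circle[of z] by (intro image_eqI[of _ _ "Arg2pi z / (2 * pi)"]) simp_all
  qed auto
  have "continuous_on {0..1} (\<lambda>t. cis (2 * pi * circle_lift u t))"
    unfolding cis_conv_exp by (intro continuous_intros continuous_on_subset[OF assms subset_UNIV])
  then show "continuous_on {0..1} (circle_map u \<circ> (\<lambda>t. cis (2 * pi * t)))"
    by (simp add: o_def circle_map_cis)
qed simp

lemma strict_mono_unit_interval:
  fixes w :: "real \<Rightarrow> real"
  assumes "strict_mono w" "w 0 = 0" "w 1 = 1" "0 \<le> t" "t < 1"
  shows "0 \<le> w t \<and> w t < 1"
proof -
  have "w 0 \<le> w t" "w t < w 1"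
    using assms(1,4,5) by (simp_all add: strict_mono_less_eq strict_mono_less)
  with assms(2,3) show ?thesis by simp
qed

lemma circle_map_in_Homeo_plus_S1:
  assumes "strict_mono u" "surj u" "u 0 = 0" "u 1 = 1"
  shows "circle_map u \<in> carrier Homeo_plus_S1"
proof -
  define u' where "u' = Hilbert_Choice.inv u"
  note u' = strict_mono_surj_inv[OF assms(1,2), folded u'_def]
  have "u' 0 = 0" "u' 1 = 1"
    using pointfree_idE[OF u'(2), of 0] pointfree_idE[OF u'(2), of 1] assms(3,4) by simp_all
  note unit_u = strict_mono_unit_interval[OF assms(1,3,4)]
    and unit_u' = strict_mono_unit_interval[OF u'(3) \<open>u' 0 = 0\<close> \<open>u' 1 = 1\<close>]
  have circle_inverse: "circle_map u \<circ> circle_map u' = id" "circle_map u' \<circ> circle_map u = id"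
    using circle_map_comp[of u' u] circle_map_comp[of u u'] unit_u unit_u' u'(1,2)
    by (simp_all add: circle_map_id)
  have lift_inverse: "circle_lift u \<circ> circle_lift u' = id" "circle_lift u' \<circ> circle_lift u = id"
    using circle_lift_comp[of u' u] circle_lift_comp[of u u'] unit_u unit_u' u'(1,2)
    by (simp_all add: circle_lift_id)
  have "surj (circle_lift u)" "surj (circle_lift u')"
    using lift_inverse by (simp_all add: comp_eq_id_imp_surj)
  moreover have mono: "strict_mono (circle_lift u)" "strict_mono (circle_lift u')"
    using strict_mono_circle_lift assms(1,3,4) u'(3) \<open>u' 0 = 0\<close> \<open>u' 1 = 1\<close> by blast+
  ultimately have cont: "continuous_on UNIV (circle_lift u)" "continuous_on UNIV (circle_lift u')"
    by (simp_all add: strict_mono_surj_imp_continuous)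
  have "circle_map u' (circle_map u z) = z" "circle_map u (circle_map u' z) = z" for z
    using circle_inverse by (simp_all add: pointfree_idE)
  moreover have "circle_map w z \<in> circle" if "z \<in> circle" for w z
    using that by (simp add: circle_map_def)
  ultimately have "homeomorphism circle circle (circle_map u) (circle_map u')"
    using cont by (intro homeomorphismI) (auto simp: continuous_on_circle_map)
  moreover have "\<forall>t. circle_map u (cis (2 * pi * t)) = cis (2 * pi * circle_lift u t)"
    by (simp add: circle_map_cis)
  ultimately show ?thesis
    using cont(1) mono(1) circle_lift_add_1[of u]
    unfolding Homeo_plus_S1_def by (auto simp: circle_map_def)
qed

lemma interval_conj_unit_interval:
  "0 \<le> t \<Longrightarrow> t < 1 \<Longrightarrow> 0 \<le> interval_conj f t \<and> interval_conj f t < 1"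
  using interval_conj_bounds[of t f] by (cases "t = 0") (simp_all add: interval_conj_outside)

definition circle_conj :: "(real \<Rightarrow> real) \<Rightarrow> complex \<Rightarrow> complex" where
  "circle_conj f = circle_map (interval_conj f)"

lemma circle_conj_comp: "circle_conj (f \<circ> g) = circle_conj f \<circ> circle_conj g"
  by (simp add: circle_conj_def interval_conj_comp circle_map_comp interval_conj_unit_interval)

lemma circle_conj_id: "circle_conj id = id"
  by (simp add: circle_conj_def interval_conj_id circle_map_id)

lemma inj_circle_conj: "inj circle_conj"
proof (rule injI)
  fix f g assume eq: "circle_conj f = circle_conj g"
  have "interval_conj f t = interval_conj g t" for t
  proof (cases "0 < t \<and> t < 1")
    case True
    with eq show ?thesis
      unfolding circle_conj_def by (intro circle_map_eq_imp_eq interval_conj_unit_interval) simp_all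
  qed (simp add: interval_conj_outside)
  then have "interval_conj f = interval_conj g" ..
  with inj_interval_conj show "f = g"
    by (simp add: inj_eq)
qed

lemma circle_conj_in_Homeo_plus_S1:
  assumes "strict_mono f" and "surj f"
  shows "circle_conj f \<in> carrier Homeo_plus_S1"
  unfolding circle_conj_def using assms
  by (intro circle_map_in_Homeo_plus_S1 strict_mono_interval_conj surj_interval_conj)
    (simp_all add: interval_conj_outside)

theorem theorem1p5:
  fixes m n :: nat
  assumes "1 \<le> m" and "m < n"
  shows "contains_copy_of Diff_omega_plus_R (BS m n)
       \<and> contains_copy_of Homeo_plus_S1 (BS m n)
       \<and> contains_copy_of Homeo_plus_I (BS m n)"
proof -
  obtain g where faithful: "faithful_BS_action m n g" and "\<And>l. g l \<in> holomorphic_diffeos"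
    using exists_holomorphic_faithful_BS_action[of m n] assms by auto
  then have diffeo: "word_action g w \<in> holomorphic_diffeos" for w
    by (simp add: word_action_in_holomorphic_diffeos)
  then have mono_surj: "strict_mono (word_action g w)" "surj (word_action g w)" for w
    by (simp_all add: holomorphic_diffeos_def bij_is_surj)
  have "contains_copy_of Diff_omega_plus_R (BS m n)"
    using faithful diffeo holomorphic_diffeos_subset_Diff_omega_plus_R
    by (intro contains_copy_of_BS) (auto simp: Diff_omega_plus_R_def)
  moreover have "contains_copy_of Homeo_plus_S1 (BS m n)"
    by (rule contains_copy_of_BS_hom[OF faithful circle_conj_comp circle_conj_id inj_circle_conj _ _
          circle_conj_in_Homeo_plus_S1[OF mono_surj]]) (simp_all add: Homeo_plus_S1_def)
  moreover have "contains_copy_of Homeo_plus_I (BS m n)"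
    by (rule contains_copy_of_BS_hom[OF faithful interval_conj_comp interval_conj_id inj_interval_conj _ _
          interval_conj_in_Homeo_plus_I[OF mono_surj]]) (simp_all add: Homeo_plus_I_def)
  ultimately show ?thesis by blast
qed

end
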